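(* Let $r(t)\in\mathbb{R}^k$ be an RC process, let $t\in\mathbb{Z}$, $\sigma\in\Sigma$, and let $z$ be a real random variable that is a finite linear combination of the coordinates of the random vectors $z^r_v(t)$, $v\in L$. Then $E[z^2u_\sigma(t)^2]\le p_\sigma E[z^2]$.
   Context: Setting (RC framework). All random variables are on one probability space. $\Sigma$ is a finite alphabet, $\Sigma^*$ the finite words (empty word $\epsilon$), $\Sigma^+=\Sigma^*\setminus\{\epsilon\}$, $|w|$ the length. Fix reals $p_\sigma>0$ ($\sigma\in\Sigma$); $p_\epsilon=1$, $p_{\sigma_1\cdots\sigma_k}=p_{\sigma_1}\cdots p_{\sigma_k}$. Input processes are scalar processes $\{u_\sigma(t)\}_{t\in\mathbb{Z}}$, $\sigma\in\Sigma$, such that $\sum_\sigma\alpha_\sigma u_\sigma(t)=1$ for some real constants $\alpha_\sigma$, and all first and second moments of $u_w(t)$ are finite, where for $w=\sigma_1\cdots\sigma_k\in\Sigma^+$, $u_w(t)=u_{\sigma_1}(t-k+1)u_{\sigma_2}(t-k+2)\cdots u_{\sigma_k}(t)$. For a process $r(t)\in\mathbb{R}^k$ and $w\in\Sigma^+$ set $z^r_w(t)=r(t-|w|)u_w(t-1)/\sqrt{p_w}$. A fixed set $L\subseteq\Sigma^+$ of admissible words satisfies: $\Sigma\subseteq L$; $u_w(t)=0$ a.s. for $w\notin L$; and there is $S\subseteq\Sigma\times\Sigma$ such that a word $\sigma_1\cdots\sigma_k$ with $k>1$ is in $L$ iff $(\sigma_i,\sigma_{i+1})\in S$ for all $i$.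 A process $r(t)\in\mathbb{R}^k$ is RC (recursive covariance) if: (1) $E[r(t)]=0$, $E[z^r_w(t)]=0$, and $E[r(t)z^r_w(t)^T]$, $E[z^r_w(t)z^r_v(t)^T]$ are finite and independent of $t$ for all $w,v\in\Sigma^+$; write $T^r_{w,v}=E[z^r_w(t)z^r_v(t)^T]$, $\Lambda^r_w=E[r(t)z^r_w(t)^T]$; (2) for $w,v\in\Sigma^+$, $\sigma,\sigma'\in\Sigma$: $T^r_{\sigma,\sigma'}=0$ if $\sigma\neq\sigma'$; $T^r_{w\sigma,v\sigma'}=0$ if $\sigma\ne\sigma'$ and $T^r_{w\sigma,v\sigma}=T^r_{w,v}$ if $w\sigma\in L$ or $v\sigma\in L$; $T^r_{w\sigma,\sigma'}=0$ if $\sigma\neq\sigma'$ and $T^r_{w\sigma,\sigma}=(\Lambda^r_w)^T$; (3) $T^r_{w,v}=0$ if $w\notin L$ or $v\notin L$, and for $\sigma\in\Sigma$, if $w\sigma\in L$ and $v\sigma\notin L$ then $T^r_{v,w}=0$ and $T^r_{w,v}=0$. *)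

theory Defs
  imports "HOL-Probability.Probability"
begin

(* Conventions.
   - Alphabet Sigma = UNIV of a finite type 's; words are lists 's list,
     the word sigma_1 ... sigma_k is the list [sigma_1, ..., sigma_k]; Sigma^+ = nonempty lists.
   - Probability space: M with prob_space M; random variables are functions 'a => real.
   - Input processes: u sigma t  (the scalar random variable u_sigma(t)).
   - A process r(t) in R^k is given coordinatewise: r t i, i :: 'k (finite index type, k = CARD('k)). *)

definition uw :: "('s \<Rightarrow> int \<Rightarrow> 'a \<Rightarrow> real) \<Rightarrow> 's list \<Rightarrow> int \<Rightarrow> 'a \<Rightarrow> real" where
  "uw u w t x = (\<Prod>j<length w. u (w ! j) (t - int (length w) + 1 + int j) x)"

definition pw :: "('s \<Rightarrow> real) \<Rightarrow> 's list \<Rightarrow> real" where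
  "pw p w = prod_list (map p w)"

definition zr :: "('s \<Rightarrow> int \<Rightarrow> 'a \<Rightarrow> real) \<Rightarrow> ('s \<Rightarrow> real) \<Rightarrow> (int \<Rightarrow> 'k \<Rightarrow> 'a \<Rightarrow> real)
    \<Rightarrow> 's list \<Rightarrow> int \<Rightarrow> 'k \<Rightarrow> 'a \<Rightarrow> real" where
  "zr u p r w t i x = r (t - int (length w)) i x * uw u w (t - 1) x / sqrt (pw p w)"

definition input_processes :: "'a measure \<Rightarrow> ('s::finite \<Rightarrow> int \<Rightarrow> 'a \<Rightarrow> real) \<Rightarrow> bool" where
  "input_processes M u \<longleftrightarrow>
     (\<forall>\<sigma> t. u \<sigma> t \<in> borel_measurable M) \<and>
     (\<exists>\<alpha> :: 's \<Rightarrow> real. \<forall>t. AE x in M. (\<Sum>\<sigma>\<in>UNIV. \<alpha> \<sigma> * u \<sigma> t x) = 1) \<and>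
     (\<forall>w t. w \<noteq> [] \<longrightarrow> integrable M (uw u w t) \<and> integrable M (\<lambda>x. (uw u w t x)\<^sup>2))"

definition admissible_words :: "'a measure \<Rightarrow> ('s \<Rightarrow> int \<Rightarrow> 'a \<Rightarrow> real) \<Rightarrow> 's list set \<Rightarrow> bool" where
  "admissible_words M u L \<longleftrightarrow>
     (\<forall>w\<in>L. w \<noteq> []) \<and>
     (\<forall>\<sigma>. [\<sigma>] \<in> L) \<and>
     (\<forall>w t. w \<noteq> [] \<and> w \<notin> L \<longrightarrow> (AE x in M. uw u w t x = 0)) \<and>
     (\<exists>S. \<forall>w. length w > 1 \<longrightarrow>
          (w \<in> L \<longleftrightarrow> (\<forall>i. Suc i < length w \<longrightarrow> (w ! i, w ! Suc i) \<in> S)))"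

(* T^r_{w,v} (entry i j) and Lambda^r_w (entry i j), evaluated at time 0
   (they are independent of t by condition (1) of RC) *)
definition Tm :: "'a measure \<Rightarrow> ('s \<Rightarrow> int \<Rightarrow> 'a \<Rightarrow> real) \<Rightarrow> ('s \<Rightarrow> real) \<Rightarrow> (int \<Rightarrow> 'k \<Rightarrow> 'a \<Rightarrow> real)
    \<Rightarrow> 's list \<Rightarrow> 's list \<Rightarrow> 'k \<Rightarrow> 'k \<Rightarrow> real" where
  "Tm M u p r w v i j = (\<integral>x. zr u p r w 0 i x * zr u p r v 0 j x \<partial>M)"

definition Lam :: "'a measure \<Rightarrow> ('s \<Rightarrow> int \<Rightarrow> 'a \<Rightarrow> real) \<Rightarrow> ('s \<Rightarrow> real) \<Rightarrow> (int \<Rightarrow> 'k \<Rightarrow> 'a \<Rightarrow> real)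
    \<Rightarrow> 's list \<Rightarrow> 'k \<Rightarrow> 'k \<Rightarrow> real" where
  "Lam M u p r w i j = (\<integral>x. r 0 i x * zr u p r w 0 j x \<partial>M)"

definition RC :: "'a measure \<Rightarrow> ('s \<Rightarrow> int \<Rightarrow> 'a \<Rightarrow> real) \<Rightarrow> ('s \<Rightarrow> real) \<Rightarrow> 's list set
    \<Rightarrow> (int \<Rightarrow> 'k \<Rightarrow> 'a \<Rightarrow> real) \<Rightarrow> bool" where
  "RC M u p L r \<longleftrightarrow>
     \<comment> \<open>(1)\<close>
     (\<forall>t i. integrable M (r t i) \<and> (\<integral>x. r t i x \<partial>M) = 0) \<and>
     (\<forall>w t i. w \<noteq> [] \<longrightarrow> integrable M (zr u p r w t i) \<and> (\<integral>x. zr u p r w t i x \<partial>M) = 0) \<and>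
     (\<forall>w t i j. w \<noteq> [] \<longrightarrow>
        integrable M (\<lambda>x. r t i x * zr u p r w t j x) \<and>
        (\<integral>x. r t i x * zr u p r w t j x \<partial>M) = Lam M u p r w i j) \<and>
     (\<forall>w v t i j. w \<noteq> [] \<and> v \<noteq> [] \<longrightarrow>
        integrable M (\<lambda>x. zr u p r w t i x * zr u p r v t j x) \<and>
        (\<integral>x. zr u p r w t i x * zr u p r v t j x \<partial>M) = Tm M u p r w v i j) \<and>
     \<comment> \<open>(2)\<close>
     (\<forall>\<sigma> \<sigma>' i j. \<sigma> \<noteq> \<sigma>' \<longrightarrow> Tm M u p r [\<sigma>] [\<sigma>'] i j = 0) \<and>
     (\<forall>w v \<sigma> \<sigma>' i j. w \<noteq> [] \<and> v \<noteq> [] \<and> \<sigma> \<noteq> \<sigma>' \<longrightarrow>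
        Tm M u p r (w @ [\<sigma>]) (v @ [\<sigma>']) i j = 0) \<and>
     (\<forall>w v \<sigma> i j. w \<noteq> [] \<and> v \<noteq> [] \<and> (w @ [\<sigma>] \<in> L \<or> v @ [\<sigma>] \<in> L) \<longrightarrow>
        Tm M u p r (w @ [\<sigma>]) (v @ [\<sigma>]) i j = Tm M u p r w v i j) \<and>
     (\<forall>w \<sigma> \<sigma>' i j. w \<noteq> [] \<and> \<sigma> \<noteq> \<sigma>' \<longrightarrow> Tm M u p r (w @ [\<sigma>]) [\<sigma>'] i j = 0) \<and>
     (\<forall>w \<sigma> i j. w \<noteq> [] \<longrightarrow> Tm M u p r (w @ [\<sigma>]) [\<sigma>] i j = Lam M u p r w j i) \<and>
     \<comment> \<open>(3)\<close>
     (\<forall>w v i j. w \<noteq> [] \<and> v \<noteq> [] \<and> (w \<notin> L \<or> v \<notin> L) \<longrightarrow> Tm M u p r w v i j = 0) \<and>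
     (\<forall>w v \<sigma> i j. w \<noteq> [] \<and> v \<noteq> [] \<and> w @ [\<sigma>] \<in> L \<and> v @ [\<sigma>] \<notin> L \<longrightarrow>
        Tm M u p r v w i j = 0 \<and> Tm M u p r w v i j = 0)"

end

theory Submission
  imports Defs
begin

text \<open>Write \<open>z = \<Sum> c\<^sub>g z\<^sub>g\<close> with \<open>z\<^sub>g = z\<^sup>r\<^sub>v(t)\<close>. Since \<open>z\<^sup>r\<^sub>v(t) u\<^sub>\<sigma>(t) = \<surd>p\<^sub>\<sigma> z\<^sup>r\<^sub>v\<^sub>\<sigma>(t+1)\<close>,
  both \<open>E[z\<^sup>2]\<close> and \<open>E[z\<^sup>2 u\<^sub>\<sigma>(t)\<^sup>2]/p\<^sub>\<sigma>\<close> are quadratic forms in \<open>c\<close>, with Gram matrices \<open>T\<^sup>r\<^sub>v\<^sub>,\<^sub>w\<close> and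
  \<open>T\<^sup>r\<^sub>v\<^sub>\<sigma>\<^sub>,\<^sub>w\<^sub>\<sigma>\<close>. Split the indices according to whether \<open>v\<sigma> \<in> L\<close>. By the RC conditions the second
  Gram matrix agrees with the first on the admissible block and vanishes elsewhere, while the
  first has no entries between the two blocks. Hence \<open>E[z\<^sup>2]\<close> exceeds \<open>E[z\<^sup>2 u\<^sub>\<sigma>(t)\<^sup>2]/p\<^sub>\<sigma>\<close> by the
  quadratic form of the non-admissible block, which is a second moment and so nonnegative.\<close>

lemma
  fixes f :: "'g \<Rightarrow> 'a \<Rightarrow> real"
  assumes "finite G" "\<And>g h. g \<in> G \<Longrightarrow> h \<in> G \<Longrightarrow> integrable M (\<lambda>x. f g x * f h x)"
  shows integrable_square_sum: "integrable M (\<lambda>x. (\<Sum>g\<in>G. a g * f g x)\<^sup>2)"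
    and integral_square_sum:
      "(\<integral>x. (\<Sum>g\<in>G. a g * f g x)\<^sup>2 \<partial>M) = (\<Sum>g\<in>G. \<Sum>h\<in>G. a g * a h * (\<integral>x. f g x * f h x \<partial>M))"
proof -
  have expand: "(\<lambda>x. (\<Sum>g\<in>G. a g * f g x)\<^sup>2) = (\<lambda>x. \<Sum>g\<in>G. \<Sum>h\<in>G. a g * a h * (f g x * f h x))"
    by (auto simp: power2_eq_square sum_product algebra_simps)
  show "integrable M (\<lambda>x. (\<Sum>g\<in>G. a g * f g x)\<^sup>2)"
    unfolding expand using assms by auto
  show "(\<integral>x. (\<Sum>g\<in>G. a g * f g x)\<^sup>2 \<partial>M) = (\<Sum>g\<in>G. \<Sum>h\<in>G. a g * a h * (\<integral>x. f g x * f h x \<partial>M))"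
    unfolding expand using assms by (simp add: Bochner_Integration.integral_sum)
qed

lemma quadratic_form_block_le:
  fixes T T' :: "'g \<Rightarrow> 'g \<Rightarrow> real"
  assumes "finite F" "A \<subseteq> F"
    and cross: "\<And>g h. g \<in> A \<Longrightarrow> h \<in> F - A \<Longrightarrow> T g h = 0 \<and> T h g = 0"
    and T': "\<And>g h. g \<in> F \<Longrightarrow> h \<in> F \<Longrightarrow> T' g h = (if g \<in> A \<and> h \<in> A then T g h else 0)"
    and nonneg: "0 \<le> (\<Sum>g\<in>F - A. \<Sum>h\<in>F - A. a g * a h * T g h)"
  shows "(\<Sum>g\<in>F. \<Sum>h\<in>F. a g * a h * T' g h) \<le> (\<Sum>g\<in>F. \<Sum>h\<in>F. a g * a h * T g h)"
proof -
  let ?Q = "\<lambda>G H. \<Sum>g\<in>G. \<Sum>h\<in>H. a g * a h * T g h"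
  have split: "\<And>f. sum f F = sum f (F - A) + sum f A"
    by (rule sum.subset_diff[OF assms(2,1)])
  have "(\<Sum>g\<in>F. \<Sum>h\<in>F. a g * a h * T' g h) = ?Q A A"
    using assms(1,2) T'
    by (intro sum.mono_neutral_cong_right ballI sum.neutral sum.mono_neutral_cong_right)
       (auto intro: finite_subset simp: subset_iff)
  moreover have "?Q F F = ?Q (F - A) (F - A) + ?Q A A"
    using cross by (simp add: split sum.distrib sum.neutral)
  ultimately show ?thesis
    using nonneg by simp
qed

lemma uw_snoc: "uw u (w @ [\<sigma>]) t x = uw u w (t - 1) x * u \<sigma> t x"
  unfolding uw_def by (auto simp: prod.lessThan_Suc nth_append algebra_simps intro!: prod.cong)

lemma zr_snoc: "zr u p r (w @ [\<sigma>]) (t + 1) i x = zr u p r w t i x * u \<sigma> t x / sqrt (p \<sigma>)"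
  unfolding zr_def by (simp add: uw_snoc pw_def real_sqrt_mult algebra_simps)

lemma
  assumes "RC M u p L r" "w \<noteq> []" "v \<noteq> []"
  shows RC_integrable_zr_mult: "integrable M (\<lambda>x. zr u p r w t i x * zr u p r v t j x)"
    and RC_integral_zr_mult: "(\<integral>x. zr u p r w t i x * zr u p r v t j x \<partial>M) = Tm M u p r w v i j"
  using assms unfolding RC_def by (elim conjE; simp)+

lemma RC_Tm_snoc_admissible:
  assumes "RC M u p L r" "w \<noteq> []" "v \<noteq> []" "w @ [\<sigma>] \<in> L \<or> v @ [\<sigma>] \<in> L"
  shows "Tm M u p r (w @ [\<sigma>]) (v @ [\<sigma>]) i j = Tm M u p r w v i j"
  using assms unfolding RC_def by (elim conjE; simp)

lemma RC_Tm_not_admissible: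
  assumes "RC M u p L r" "w \<noteq> []" "v \<noteq> []" "w \<notin> L \<or> v \<notin> L"
  shows "Tm M u p r w v i j = 0"
  using assms unfolding RC_def by (elim conjE; simp)

lemma RC_Tm_admissible_cross:
  assumes "RC M u p L r" "w \<noteq> []" "v \<noteq> []" "w @ [\<sigma>] \<in> L" "v @ [\<sigma>] \<notin> L"
  shows "Tm M u p r w v i j = 0" and "Tm M u p r v w i j = 0"
  using assms unfolding RC_def by (elim conjE; blast)+

lemma RC_Tm_snoc:
  assumes "RC M u p L r" "w \<noteq> []" "v \<noteq> []"
  shows "Tm M u p r (w @ [\<sigma>]) (v @ [\<sigma>]) i j
           = (if w @ [\<sigma>] \<in> L \<and> v @ [\<sigma>] \<in> L then Tm M u p r w v i j else 0)"
  using assms RC_Tm_snoc_admissible[OF assms] RC_Tm_admissible_cross[OF assms]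
    RC_Tm_not_admissible[of M u p L r "w @ [\<sigma>]" "v @ [\<sigma>]"]
  by auto

lemma
  assumes "RC M u p L r" "finite G" "\<And>g. g \<in> G \<Longrightarrow> w g \<noteq> []"
  shows RC_integrable_square_lincomb:
      "integrable M (\<lambda>x. (\<Sum>g\<in>G. a g * zr u p r (w g) t (k g) x)\<^sup>2)"
    and RC_integral_square_lincomb:
      "(\<integral>x. (\<Sum>g\<in>G. a g * zr u p r (w g) t (k g) x)\<^sup>2 \<partial>M)
         = (\<Sum>g\<in>G. \<Sum>h\<in>G. a g * a h * Tm M u p r (w g) (w h) (k g) (k h))"
  using assms
  by (auto intro!: integrable_square_sum sum.cong
           simp: integral_square_sum RC_integrable_zr_mult RC_integral_zr_mult)

lemma zr_lincomb_mult_input: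
  assumes "p \<sigma> > 0"
  shows "(\<Sum>g\<in>G. a g * zr u p r (w g) t (k g) x) * u \<sigma> t x
           = sqrt (p \<sigma>) * (\<Sum>g\<in>G. a g * zr u p r (w g @ [\<sigma>]) (t + 1) (k g) x)"
  using assms by (simp add: zr_snoc sum_distrib_left sum_distrib_right mult.assoc)

lemma RC_quadratic_form_snoc_le:
  assumes RC: "RC M u p L r" and G: "finite G" and ne: "\<And>g. g \<in> G \<Longrightarrow> w g \<noteq> []"
  shows "(\<Sum>g\<in>G. \<Sum>h\<in>G. a g * a h * Tm M u p r (w g @ [\<sigma>]) (w h @ [\<sigma>]) (k g) (k h))
           \<le> (\<Sum>g\<in>G. \<Sum>h\<in>G. a g * a h * Tm M u p r (w g) (w h) (k g) (k h))"
proof (rule quadratic_form_block_le[OF G])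
  let ?A = "{g \<in> G. w g @ [\<sigma>] \<in> L}"
  show "?A \<subseteq> G"
    by auto
  show "Tm M u p r (w g) (w h) (k g) (k h) = 0 \<and> Tm M u p r (w h) (w g) (k h) (k g) = 0"
    if "g \<in> ?A" "h \<in> G - ?A" for g h
    using that RC_Tm_admissible_cross[OF RC ne ne] by blast
  show "Tm M u p r (w g @ [\<sigma>]) (w h @ [\<sigma>]) (k g) (k h)
          = (if g \<in> ?A \<and> h \<in> ?A then Tm M u p r (w g) (w h) (k g) (k h) else 0)"
    if "g \<in> G" "h \<in> G" for g h
    using that RC_Tm_snoc[OF RC ne[OF that(1)] ne[OF that(2)]] by simp
  \<comment> \<open>the remaining block is a second moment, taken at time \<open>0\<close> since \<open>Tm\<close> does not depend on time\<close>
  have "(\<Sum>g\<in>G - ?A. \<Sum>h\<in>G - ?A. a g * a h * Tm M u p r (w g) (w h) (k g) (k h))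
      = (\<integral>x. (\<Sum>g\<in>G - ?A. a g * zr u p r (w g) 0 (k g) x)\<^sup>2 \<partial>M)"
    using G ne by (subst RC_integral_square_lincomb[OF RC]) auto
  then show "0 \<le> (\<Sum>g\<in>G - ?A. \<Sum>h\<in>G - ?A. a g * a h * Tm M u p r (w g) (w h) (k g) (k h))"
    by simp
qed

lemma RC_second_moment_input_le:
  assumes p: "p \<sigma> > 0" and RC: "RC M u p L r"
    and F: "finite F" "\<forall>(v, i)\<in>F. v \<noteq> []"
    and z: "\<forall>x\<in>space M. z x = (\<Sum>(v, i)\<in>F. c v i * zr u p r v t i x)"
  shows "integrable M (\<lambda>x. (z x)\<^sup>2)"
    and "integrable M (\<lambda>x. (z x)\<^sup>2 * (u \<sigma> t x)\<^sup>2)"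
    and "(\<integral>x. (z x)\<^sup>2 * (u \<sigma> t x)\<^sup>2 \<partial>M) \<le> p \<sigma> * (\<integral>x. (z x)\<^sup>2 \<partial>M)"
proof -
  define C where "C g = c (fst g) (snd g)" for g
  have ne: "\<And>g. g \<in> F \<Longrightarrow> fst g \<noteq> []" "\<And>g. g \<in> F \<Longrightarrow> fst g @ [\<sigma>] \<noteq> []"
    using F(2) by auto
  have square_z: "(z x)\<^sup>2 = (\<Sum>g\<in>F. C g * zr u p r (fst g) t (snd g) x)\<^sup>2" if "x \<in> space M" for x
    using z that by (simp add: C_def split_def)
  have square_zu: "(z x)\<^sup>2 * (u \<sigma> t x)\<^sup>2
      = p \<sigma> * (\<Sum>g\<in>F. C g * zr u p r (fst g @ [\<sigma>]) (t + 1) (snd g) x)\<^sup>2" if "x \<in> space M" for x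
  proof -
    have "(z x)\<^sup>2 * (u \<sigma> t x)\<^sup>2 = ((\<Sum>g\<in>F. C g * zr u p r (fst g) t (snd g) x) * u \<sigma> t x)\<^sup>2"
      by (simp add: square_z[OF that] power_mult_distrib)
    also have "\<dots> = p \<sigma> * (\<Sum>g\<in>F. C g * zr u p r (fst g @ [\<sigma>]) (t + 1) (snd g) x)\<^sup>2"
      using p by (simp only: zr_lincomb_mult_input[where p = p and \<sigma> = \<sigma>, OF p] power_mult_distrib real_sqrt_pow2 less_imp_le)
    finally show ?thesis .
  qed
  show "integrable M (\<lambda>x. (z x)\<^sup>2)"
    using RC_integrable_square_lincomb[OF RC F(1), of fst, OF ne(1)]
    by (simp add: square_z cong: Bochner_Integration.integrable_cong)
  show "integrable M (\<lambda>x. (z x)\<^sup>2 * (u \<sigma> t x)\<^sup>2)"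
    using RC_integrable_square_lincomb[OF RC F(1), of "\<lambda>g. fst g @ [\<sigma>]", OF ne(2)]
    by (simp add: square_zu cong: Bochner_Integration.integrable_cong)
  have "(\<integral>x. (z x)\<^sup>2 * (u \<sigma> t x)\<^sup>2 \<partial>M)
      = p \<sigma> * (\<integral>x. (\<Sum>g\<in>F. C g * zr u p r (fst g @ [\<sigma>]) (t + 1) (snd g) x)\<^sup>2 \<partial>M)"
    by (simp add: square_zu cong: Bochner_Integration.integral_cong)
  also have "\<dots> = p \<sigma> * (\<Sum>g\<in>F. \<Sum>h\<in>F. C g * C h * Tm M u p r (fst g @ [\<sigma>]) (fst h @ [\<sigma>]) (snd g) (snd h))"
    using ne(2) by (subst RC_integral_square_lincomb[OF RC F(1)]) auto
  also have "\<dots> \<le> p \<sigma> * (\<Sum>g\<in>F. \<Sum>h\<in>F. C g * C h * Tm M u p r (fst g) (fst h) (snd g) (snd h))"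
    using p RC_quadratic_form_snoc_le[OF RC F(1) ne(1)] by simp
  also have "\<dots> = p \<sigma> * (\<integral>x. (\<Sum>g\<in>F. C g * zr u p r (fst g) t (snd g) x)\<^sup>2 \<partial>M)"
    using ne(1) by (subst RC_integral_square_lincomb[OF RC F(1)]) auto
  also have "\<dots> = p \<sigma> * (\<integral>x. (z x)\<^sup>2 \<partial>M)"
    by (simp add: square_z cong: Bochner_Integration.integral_cong)
  finally show "(\<integral>x. (z x)\<^sup>2 * (u \<sigma> t x)\<^sup>2 \<partial>M) \<le> p \<sigma> * (\<integral>x. (z x)\<^sup>2 \<partial>M)" .
qed

theorem mainTheorem2:
  fixes M :: "'a measure"
    and u :: "'s::finite \<Rightarrow> int \<Rightarrow> 'a \<Rightarrow> real"
    and p :: "'s \<Rightarrow> real"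
    and L :: "'s list set"
    and r :: "int \<Rightarrow> 'k::finite \<Rightarrow> 'a \<Rightarrow> real"
    and t :: int and \<sigma> :: 's
    and z :: "'a \<Rightarrow> real"
    and F :: "('s list \<times> 'k) set" and c :: "'s list \<Rightarrow> 'k \<Rightarrow> real"
  assumes "prob_space M"
    and "\<forall>\<tau>. p \<tau> > 0"
    and "input_processes M u"
    and "admissible_words M u L"
    and "RC M u p L r"
    and "finite F" and "\<forall>(v, i)\<in>F. v \<in> L"
    and "\<forall>x\<in>space M. z x = (\<Sum>(v, i)\<in>F. c v i * zr u p r v t i x)"
  shows "(\<integral>\<^sup>+x. ennreal ((z x)\<^sup>2 * (u \<sigma> t x)\<^sup>2) \<partial>M)
           \<le> ennreal (p \<sigma>) * (\<integral>\<^sup>+x. ennreal ((z x)\<^sup>2) \<partial>M)"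
proof -
  have p: "p \<sigma> > 0"
    using assms(2) by simp
  \<comment> \<open>only nonemptiness of the words is needed, not \<open>v \<in> L\<close>; neither is \<open>prob_space M\<close> nor \<open>input_processes M u\<close>\<close>
  have "\<forall>(v, i)\<in>F. v \<noteq> []"
    using assms(4,7) unfolding admissible_words_def by auto
  note moments = RC_second_moment_input_le[OF p assms(5,6) this assms(8)]
  have "(\<integral>\<^sup>+x. ennreal ((z x)\<^sup>2 * (u \<sigma> t x)\<^sup>2) \<partial>M) = ennreal (\<integral>x. (z x)\<^sup>2 * (u \<sigma> t x)\<^sup>2 \<partial>M)"
    using moments(2) by (intro nn_integral_eq_integral) auto
  also have "\<dots> \<le> ennreal (p \<sigma> * (\<integral>x. (z x)\<^sup>2 \<partial>M))"
    using moments(3) by (rule ennreal_leI)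
  also have "\<dots> = ennreal (p \<sigma>) * (\<integral>\<^sup>+x. ennreal ((z x)\<^sup>2) \<partial>M)"
    using moments(1) p by (simp add: ennreal_mult nn_integral_eq_integral)
  finally show ?thesis .
qed

end
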